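(* Let $f$ be a homeomorphism of a compact metric space $X$. If $f$ is positively finite-expansive and has the shadowing property, then $X$ is finite.
   Context: $f$ is positively finite-expansive if there is $c>0$ such that $W^s_c(x)=\{y\in X: d(f^n(x),f^n(y))\le c\ \forall n\ge 0\}$ is finite for every $x\in X$. Shadowing: for every $\varepsilon>0$ there is $\delta>0$ such that for every sequence $(x_k)_{k\in\mathbb{Z}}$ with $d(f(x_k),x_{k+1})<\delta$ for all $k$ there is $y$ with $d(f^k(y),x_k)<\varepsilon$ for all $k\in\mathbb{Z}$. *)

theory Defs
  imports "HOL-Analysis.Analysis"
begin

definition ziter :: "'a set \<Rightarrow> ('a \<Rightarrow> 'a) \<Rightarrow> int \<Rightarrow> 'a \<Rightarrow> 'a" where
  "ziter X f k = (if 0 \<le> k then f ^^ nat k else (inv_into X f) ^^ nat (- k))"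

definition local_stable_set :: "'a::metric_space set \<Rightarrow> ('a \<Rightarrow> 'a) \<Rightarrow> real \<Rightarrow> 'a \<Rightarrow> 'a set" where
  "local_stable_set X f c x = {y \<in> X. \<forall>n::nat. dist ((f ^^ n) x) ((f ^^ n) y) \<le> c}"

definition pos_finite_expansive :: "'a::metric_space set \<Rightarrow> ('a \<Rightarrow> 'a) \<Rightarrow> bool" where
  "pos_finite_expansive X f \<longleftrightarrow>
     (\<exists>c>0. \<forall>x\<in>X. finite (local_stable_set X f c x))"

definition has_shadowing :: "'a::metric_space set \<Rightarrow> ('a \<Rightarrow> 'a) \<Rightarrow> bool" where
  "has_shadowing X f \<longleftrightarrow>
     (\<forall>\<epsilon>>0. \<exists>\<delta>>0. \<forall>xs :: int \<Rightarrow> 'a.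
        (\<forall>k. xs k \<in> X) \<longrightarrow> (\<forall>k. dist (f (xs k)) (xs (k + 1)) < \<delta>) \<longrightarrow>
        (\<exists>y\<in>X. \<forall>k. dist (ziter X f k y) (xs k) < \<epsilon>))"

end

theory Submission
  imports Defs
begin

text \<open>Shadowing yields a local product structure: nearby points x and y are joined by a point z
  that follows x forward and y backward. By compactness, finitely many local unstable sets,
  based at points of finitely many local stable sets, then cover X. If X were infinite, finite
  expansivity would provide more pairwise forward-separated points than there are covering sets,
  all separated before a common time N. Two of them lie, at time N, in the same local unstable
  set, so iterating f backwards keeps them close up to time N, a contradiction.\<close>

lemma funpow_in:
  assumes "f ` X \<subseteq> X" "x \<in> X"
  shows "(f ^^ n) x \<in> X"
  using assms by (induction n) auto

lemma funpow_inv_into_cancel: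
  assumes "inj_on f X" "f ` X \<subseteq> X" "p \<in> X"
  shows "(inv_into X f ^^ m) ((f ^^ (m + n)) p) = (f ^^ n) p"
proof (induction m)
  case 0
  then show ?case by simp
next
  case (Suc m)
  have "(f ^^ (m + n)) p \<in> X"
    using assms(2,3) by (rule funpow_in)
  then have "inv_into X f ((f ^^ (Suc m + n)) p) = (f ^^ (m + n)) p"
    using assms(1) by simp
  then show ?case
    using Suc by (simp only: funpow_Suc_right o_apply)
qed

lemma local_stable_set_mono:
  "r \<le> s \<Longrightarrow> local_stable_set X f r x \<subseteq> local_stable_set X f s x"
  by (auto simp: local_stable_set_def intro: order.trans)

lemma ziter_of_nat [simp]: "ziter X f (int n) = f ^^ n"
  by (simp add: ziter_def)

lemma ziter_minus_of_nat [simp]: "n > 0 \<Longrightarrow> ziter X f (- int n) = inv_into X f ^^ n"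
  by (simp add: ziter_def)

lemma ziter_in:
  assumes "f ` X = X" "y \<in> X"
  shows "ziter X f k y \<in> X"
proof -
  have "inv_into X f ` X \<subseteq> X"
    using assms(1) by (auto intro: inv_into_into)
  then show ?thesis
    using assms by (auto simp: ziter_def intro: funpow_in)
qed

lemma ziter_step:
  assumes "f ` X = X" "y \<in> X"
  shows "f (ziter X f k y) = ziter X f (k + 1) y"
proof (cases "k \<ge> 0")
  case True
  then show ?thesis
    by (simp add: ziter_def nat_add_distrib)
next
  case False
  define m where "m = nat (- k - 1)"
  have k: "k = - int (Suc m)"
    using False by (simp add: m_def)
  have "k + 1 = - int m"
    using k by simp
  then have "ziter X f (k + 1) y = (inv_into X f ^^ m) y"
    by (cases "m = 0") (simp_all add: ziter_def)
  moreover have "ziter X f k y = inv_into X f ((inv_into X f ^^ m) y)"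
    using k by (simp add: ziter_def nat_add_distrib)
  ultimately show ?thesis
    using assms ziter_in[OF assms, of "k + 1"] by (simp add: f_inv_into_f)
qed

lemma finite_pairs_uniform_bound:
  assumes "finite F" "\<forall>p\<in>F. \<forall>q\<in>F. p \<noteq> q \<longrightarrow> (\<exists>n::nat. P p q n)"
  shows "\<exists>N. \<forall>p\<in>F. \<forall>q\<in>F. p \<noteq> q \<longrightarrow> (\<exists>n\<le>N. P p q n)"
proof -
  obtain t where t: "\<forall>p\<in>F. \<forall>q\<in>F. p \<noteq> q \<longrightarrow> P p q (t p q)"
    using assms(2) by metis
  have "t p q \<le> (\<Sum>(p, q)\<in>F \<times> F. t p q)" if "p \<in> F" "q \<in> F" for p q
    using member_le_sum[of "(p, q)" "F \<times> F" "\<lambda>(p, q). t p q"] that assms(1) by simp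
  then show ?thesis
    using t by blast
qed

lemma exists_large_independent_subset:
  assumes "infinite X"
    and "\<And>p. p \<in> X \<Longrightarrow> finite {q \<in> X. R p q}"
    and "\<And>p q. R p q \<Longrightarrow> R q p"
  shows "\<exists>F\<subseteq>X. finite F \<and> card F = m \<and> (\<forall>p\<in>F. \<forall>q\<in>F. p \<noteq> q \<longrightarrow> \<not> R p q)"
proof (induction m)
  case 0
  show ?case by auto
next
  case (Suc m)
  then obtain F where F: "F \<subseteq> X" "finite F" "card F = m"
    and indep: "\<forall>p\<in>F. \<forall>q\<in>F. p \<noteq> q \<longrightarrow> \<not> R p q"
    by blast
  have "finite (F \<union> (\<Union>p\<in>F. {q \<in> X. R p q}))"
    using F assms(2) by blast
  then have "infinite (X - (F \<union> (\<Union>p\<in>F. {q \<in> X. R p q})))"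
    using assms(1) Diff_infinite_finite by blast
  then obtain q where "q \<in> X - (F \<union> (\<Union>p\<in>F. {q \<in> X. R p q}))"
    using infinite_imp_nonempty by blast
  then have q: "q \<in> X" "q \<notin> F" "\<forall>p\<in>F. \<not> R p q"
    by auto
  show ?case
  proof (intro exI[of _ "insert q F"] conjI)
    show "insert q F \<subseteq> X" "finite (insert q F)" "card (insert q F) = Suc m"
      using F q by auto
    show "\<forall>p\<in>insert q F. \<forall>r\<in>insert q F. p \<noteq> r \<longrightarrow> \<not> R p r"
      using indep q assms(3) by blast
  qed
qed

lemma exists_separated_subset:
  assumes "infinite X" "\<forall>x\<in>X. finite (local_stable_set X f c x)"
  shows "\<exists>F\<subseteq>X. finite F \<and> card F = m \<and>
           (\<forall>p\<in>F. \<forall>q\<in>F. p \<noteq> q \<longrightarrow> q \<notin> local_stable_set X f c p)"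
proof -
  define close where "close p q \<longleftrightarrow> (\<forall>n. dist ((f ^^ n) p) ((f ^^ n) q) \<le> c)" for p q
  have finite_close: "finite {q \<in> X. close p q}" if "p \<in> X" for p
    using assms(2) that by (simp add: local_stable_set_def close_def)
  have close_sym: "close q p" if "close p q" for p q
    using that by (simp add: close_def dist_commute)
  have "\<exists>F\<subseteq>X. finite F \<and> card F = m \<and> (\<forall>p\<in>F. \<forall>q\<in>F. p \<noteq> q \<longrightarrow> \<not> close p q)"
    using \<open>infinite X\<close> finite_close close_sym by (rule exists_large_independent_subset)
  then obtain F where "F \<subseteq> X" "finite F" "card F = m"
    and "\<forall>p\<in>F. \<forall>q\<in>F. p \<noteq> q \<longrightarrow> \<not> close p q"
    by blast
  then show ?thesis
    by (intro exI[of _ F]) (simp add: local_stable_set_def close_def)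
qed

text \<open>Local unstable sets of f are written as local stable sets of its inverse inv_into X f.\<close>

lemma shadowing_local_product_structure:
  fixes X :: "'a::metric_space set"
  assumes fX: "f ` X = X" and shadowing: "has_shadowing X f" and "\<epsilon> > 0"
  obtains d where "d > 0"
    and "\<And>x y. x \<in> X \<Longrightarrow> y \<in> X \<Longrightarrow> dist x y < d \<Longrightarrow>
          \<exists>z\<in>local_stable_set X f \<epsilon> x. y \<in> local_stable_set X (inv_into X f) \<epsilon> z"
proof -
  obtain \<delta> where "\<delta> > 0" and shadow: "\<forall>xs. (\<forall>k. xs k \<in> X) \<longrightarrow>
      (\<forall>k. dist (f (xs k)) (xs (k + 1)) < \<delta>) \<longrightarrow> (\<exists>z\<in>X. \<forall>k. dist (ziter X f k z) (xs k) < \<epsilon> / 2)"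
    using shadowing[unfolded has_shadowing_def, rule_format, of "\<epsilon> / 2"] \<open>\<epsilon> > 0\<close> by auto
  define d where "d = min \<delta> (\<epsilon> / 2)"
  have "\<exists>z\<in>local_stable_set X f \<epsilon> x. y \<in> local_stable_set X (inv_into X f) \<epsilon> z"
    if "x \<in> X" "y \<in> X" "dist x y < d" for x y
  proof -
    \<comment> \<open>the backward orbit of y glued to the forward orbit of x is a \<open>\<delta>\<close>-pseudo-orbit\<close>
    define xs where "xs k = ziter X f k (if k < 0 then y else x)" for k
    have "\<forall>k. xs k \<in> X"
      using that fX by (simp add: xs_def ziter_in)
    moreover have "dist (f (xs k)) (xs (k + 1)) < \<delta>" for k
    proof (cases "k = -1")
      case True
      have "f (xs k) = y"
        using ziter_step[OF fX \<open>y \<in> X\<close>, of "-1"] True by (simp add: xs_def ziter_def)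
      moreover have "xs (k + 1) = x"
        using True by (simp add: xs_def ziter_def)
      ultimately show ?thesis
        using \<open>dist x y < d\<close> by (simp add: dist_commute d_def)
    next
      case False
      then show ?thesis
        using that fX \<open>\<delta> > 0\<close> by (simp add: xs_def ziter_step)
    qed
    ultimately obtain z where "z \<in> X" and z: "\<And>k. dist (ziter X f k z) (xs k) < \<epsilon> / 2"
      using shadow by blast
    have forward: "dist ((f ^^ n) x) ((f ^^ n) z) < \<epsilon> / 2" for n
      using z[of "int n"] by (simp add: xs_def dist_commute)
    have "dist ((inv_into X f ^^ n) z) ((inv_into X f ^^ n) y) \<le> \<epsilon>" for n
    proof (cases "n = 0")
      case True
      then show ?thesis
        using forward[of 0] \<open>dist x y < d\<close> dist_triangle[of z y x]
        by (simp add: d_def dist_commute)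
    next
      case False
      then have "dist ((inv_into X f ^^ n) z) ((inv_into X f ^^ n) y) < \<epsilon> / 2"
        using z[of "- int n"] by (simp add: xs_def)
      then show ?thesis
        using \<open>\<epsilon> > 0\<close> by linarith
    qed
    moreover have "dist ((f ^^ n) x) ((f ^^ n) z) \<le> \<epsilon>" for n
      using forward[of n] \<open>\<epsilon> > 0\<close> by linarith
    ultimately have "y \<in> local_stable_set X (inv_into X f) \<epsilon> z" "z \<in> local_stable_set X f \<epsilon> x"
      using \<open>y \<in> X\<close> \<open>z \<in> X\<close> by (simp_all add: local_stable_set_def)
    then show ?thesis by blast
  qed
  moreover have "d > 0"
    using \<open>\<delta> > 0\<close> \<open>\<epsilon> > 0\<close> by (simp add: d_def)
  ultimately show ?thesis
    using that by blast
qed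

lemma finite_cover_by_unstable_sets:
  fixes X :: "'a::metric_space set"
  assumes "compact X" "f ` X = X" "has_shadowing X f" "\<epsilon> > 0"
    and finite_stable: "\<forall>x\<in>X. finite (local_stable_set X f \<epsilon> x)"
  obtains Z where "finite Z" "\<forall>y\<in>X. \<exists>z\<in>Z. y \<in> local_stable_set X (inv_into X f) \<epsilon> z"
proof -
  obtain d where "d > 0" and product: "\<And>x y. x \<in> X \<Longrightarrow> y \<in> X \<Longrightarrow> dist x y < d \<Longrightarrow>
      \<exists>z\<in>local_stable_set X f \<epsilon> x. y \<in> local_stable_set X (inv_into X f) \<epsilon> z"
    using shadowing_local_product_structure assms(2-4) by blast
  have "X \<subseteq> (\<Union>x\<in>X. ball x d)"
    using \<open>d > 0\<close> by auto
  then obtain T where "T \<subseteq> X" "finite T" and T: "X \<subseteq> (\<Union>x\<in>T. ball x d)"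
    using compactE_image[OF assms(1), of X "\<lambda>x. ball x d"] by blast
  show ?thesis
  proof
    show "finite (\<Union>x\<in>T. local_stable_set X f \<epsilon> x)"
      using \<open>T \<subseteq> X\<close> \<open>finite T\<close> finite_stable by blast
    show "\<forall>y\<in>X. \<exists>z\<in>\<Union>x\<in>T. local_stable_set X f \<epsilon> x. y \<in> local_stable_set X (inv_into X f) \<epsilon> z"
      using T product \<open>T \<subseteq> X\<close> by (fastforce simp: subset_iff)
  qed
qed

lemma separated_card_le_unstable_cover:
  fixes f :: "'a::metric_space \<Rightarrow> 'a"
  assumes inj: "inj_on f X" and fX: "f ` X \<subseteq> X" and "finite Z"
    and cover: "\<forall>y\<in>X. \<exists>z\<in>Z. y \<in> local_stable_set X (inv_into X f) r z"
    and "F \<subseteq> X" "finite F"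
    and separated: "\<forall>p\<in>F. \<forall>q\<in>F. p \<noteq> q \<longrightarrow> q \<notin> local_stable_set X f (2 * r) p"
  shows "card F \<le> card Z"
proof -
  have separation_time: "\<forall>p\<in>F. \<forall>q\<in>F. p \<noteq> q \<longrightarrow> (\<exists>n. 2 * r < dist ((f ^^ n) p) ((f ^^ n) q))"
    using separated \<open>F \<subseteq> X\<close> by (auto simp: local_stable_set_def not_le)
  obtain N where N: "\<forall>p\<in>F. \<forall>q\<in>F. p \<noteq> q \<longrightarrow> (\<exists>n\<le>N. 2 * r < dist ((f ^^ n) p) ((f ^^ n) q))"
    using finite_pairs_uniform_bound[OF \<open>finite F\<close> separation_time] by blast
  have "\<forall>p\<in>F. \<exists>z. z \<in> Z \<and> (f ^^ N) p \<in> local_stable_set X (inv_into X f) r z"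
    using cover \<open>F \<subseteq> X\<close> funpow_in[OF fX] by blast
  then obtain h where h: "\<forall>p\<in>F. h p \<in> Z \<and> (f ^^ N) p \<in> local_stable_set X (inv_into X f) r (h p)"
    by (auto dest!: bchoice)
  have "inj_on h F"
  proof (rule inj_onI, rule ccontr)
    fix p q assume "p \<in> F" "q \<in> F" "h p = h q" "p \<noteq> q"
    then obtain n where "n \<le> N" and far: "2 * r < dist ((f ^^ n) p) ((f ^^ n) q)"
      using N by blast
    define g where "g = inv_into X f"
    define m where "m = N - n"
    have "N = m + n"
      using \<open>n \<le> N\<close> by (simp add: m_def)
    have "(f ^^ N) p \<in> local_stable_set X g r (h p)" "(f ^^ N) q \<in> local_stable_set X g r (h p)"
      using h \<open>p \<in> F\<close> \<open>q \<in> F\<close> \<open>h p = h q\<close> unfolding g_def by metis+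
    then have "dist ((g ^^ m) (h p)) ((g ^^ m) ((f ^^ N) p)) \<le> r"
      "dist ((g ^^ m) (h p)) ((g ^^ m) ((f ^^ N) q)) \<le> r"
      unfolding local_stable_set_def by blast+
    moreover have "(g ^^ m) ((f ^^ N) p) = (f ^^ n) p" "(g ^^ m) ((f ^^ N) q) = (f ^^ n) q"
      using funpow_inv_into_cancel[OF inj fX] \<open>F \<subseteq> X\<close> \<open>p \<in> F\<close> \<open>q \<in> F\<close>
      unfolding g_def \<open>N = m + n\<close> by blast+
    ultimately have "dist ((g ^^ m) (h p)) ((f ^^ n) p) \<le> r" "dist ((g ^^ m) (h p)) ((f ^^ n) q) \<le> r"
      by simp_all
    then show False
      using far dist_triangle3[of "(f ^^ n) p" "(f ^^ n) q" "(g ^^ m) (h p)"] by linarith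
  qed
  moreover have "h ` F \<subseteq> Z"
    using h by blast
  ultimately show ?thesis
    using card_inj_on_le \<open>finite Z\<close> by blast
qed

theorem theoremF:
  fixes X :: "'a::metric_space set" and f :: "'a \<Rightarrow> 'a"
  assumes "compact X"
    and "\<exists>g. homeomorphism X X f g"
    and "pos_finite_expansive X f"
    and "has_shadowing X f"
  shows "finite X"
proof (rule ccontr)
  assume "infinite X"
  obtain g where "homeomorphism X X f g"
    using assms(2) by blast
  then have fX: "f ` X = X" and "\<forall>x\<in>X. g (f x) = x"
    by (simp_all add: homeomorphism_def)
  then have inj: "inj_on f X"
    by (meson inj_on_inverseI)
  obtain c where "c > 0" and finite_stable: "\<forall>x\<in>X. finite (local_stable_set X f c x)"
    using assms(3) unfolding pos_finite_expansive_def by blast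
  have "c / 2 \<le> c" "c / 2 > 0"
    using \<open>c > 0\<close> by simp_all
  then have "\<forall>x\<in>X. finite (local_stable_set X f (c / 2) x)"
    using finite_subset[OF local_stable_set_mono] finite_stable by blast
  then obtain Z where "finite Z"
    and cover: "\<forall>y\<in>X. \<exists>z\<in>Z. y \<in> local_stable_set X (inv_into X f) (c / 2) z"
    by (rule finite_cover_by_unstable_sets[OF assms(1) fX assms(4) \<open>c / 2 > 0\<close>])
  obtain F where "F \<subseteq> X" "finite F" "card F = Suc (card Z)"
    and separated: "\<forall>p\<in>F. \<forall>q\<in>F. p \<noteq> q \<longrightarrow> q \<notin> local_stable_set X f c p"
    using exists_separated_subset[OF \<open>infinite X\<close> finite_stable, of "Suc (card Z)"] by blast
  have "card F \<le> card Z"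
    using separated_card_le_unstable_cover[OF inj _ \<open>finite Z\<close> cover \<open>F \<subseteq> X\<close> \<open>finite F\<close>] fX separated
    by simp
  then show False
    using \<open>card F = Suc (card Z)\<close> by simp
qed

end
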